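(* Let $0 < a < 1$. Then \[ (1-a)\left(\frac1{a} + \frac{\pi^2}{6} - 1\right) < \psi(1) - \psi(a) < (1-a)\left(\frac1{a} + 1\right). \]
   Context: $\psi=\Gamma'/\Gamma$ is the digamma function. *)

theory Defs
  imports "HOL-Analysis.Analysis"
begin

end

theory Submission
  imports Defs
begin

text \<open>
  From the series for the digamma function,
  \<open>\<psi>(1) - \<psi>(a) = (\<Sum>k\<ge>0. (1 - a) / ((a + k) (k + 1)))\<close>.
  The term \<open>k = 0\<close> is \<open>1/a - 1\<close>; for \<open>k \<ge> 1\<close> the term lies strictly between
  \<open>(1 - a) / (k + 1)\<^sup>2\<close> and \<open>(1 - a) / (k (k + 1))\<close>, whose sums over \<open>k \<ge> 1\<close> are
  \<open>(1 - a) (\<pi>\<^sup>2/6 - 1)\<close> and \<open>1 - a\<close> (Basel problem and telescoping).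
\<close>

lemma sums_less:
  fixes f g :: "nat \<Rightarrow> real"
  assumes "\<And>n. f n < g n" and "f sums s" and "g sums t"
  shows "s < t"
proof -
  have diff: "(\<lambda>n. g n - f n) sums (t - s)"
    using assms(2,3) by (rule sums_diff[rotated])
  have "0 < (\<Sum>n. g n - f n)"
    using assms(1) diff by (intro suminf_pos) (auto dest: sums_summable)
  with diff show ?thesis
    by (simp add: sums_iff)
qed

lemma Digamma_diff_sums:
  fixes z w :: "'a :: {real_normed_field,banach}"
  assumes "z \<noteq> 0" and "w \<noteq> 0"
  shows "(\<lambda>k. inverse (z + of_nat k) - inverse (w + of_nat k)) sums (Digamma w - Digamma z)"
proof -
  have "(\<lambda>k. inverse (of_nat (Suc k)) - inverse (u + of_nat k)) sums (Digamma u + euler_mascheroni)"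
    if "u \<noteq> 0" for u :: 'a
    using summable_Digamma[OF that] by (simp add: Digamma_def summable_sums)
  from sums_diff[OF this[OF assms(2)] this[OF assms(1)]] show ?thesis
    by simp
qed

lemma Digamma_1_minus_Digamma_sums:
  fixes a :: real
  assumes "a \<notin> \<int>\<^sub>\<le>\<^sub>0"
  shows "(\<lambda>k. (1 - a) / ((a + real k) * (real k + 1))) sums (Digamma 1 - Digamma a)"
proof -
  have nonzero: "a + real k \<noteq> 0" for k
    using assms plus_of_nat_eq_0_imp by blast
  then have "inverse (a + real k) - inverse (1 + real k) = (1 - a) / ((a + real k) * (real k + 1))"
    for k by (simp add: field_simps)
  with Digamma_diff_sums[of a 1] nonzero[of 0] show ?thesis
    by (simp add: add.commute)
qed

lemma inverse_squares_from_2_sums: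
  "(\<lambda>k. 1 / (real (Suc k) + 1)\<^sup>2) sums (pi\<^sup>2 / 6 - 1)"
  using inverse_squares_sums sums_Suc_iff[of "\<lambda>n. 1 / (real n + 1)\<^sup>2" "pi\<^sup>2 / 6 - 1"]
  by (simp add: add.commute)

lemma inverse_consecutive_products_sums:
  "(\<lambda>k. 1 / (real (Suc k) * (real (Suc k) + 1))) sums 1"
proof -
  have "(\<lambda>k. 1 / real (Suc k) - 1 / real (Suc (Suc k))) sums (1 / real (Suc 0) - 0)"
    by (intro telescope_sums' LIMSEQ_inverse_real_of_nat[unfolded inverse_eq_divide])
  then show ?thesis
    by (simp add: field_simps)
qed

lemma Digamma_series_term_bounds:
  fixes a x :: real
  assumes "0 < a" and "a < 1" and "0 < x"
  shows "(1 - a) / (x + 1)\<^sup>2 < (1 - a) / ((a + x) * (x + 1))"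
    and "(1 - a) / ((a + x) * (x + 1)) < (1 - a) / (x * (x + 1))"
  using assms by (auto intro!: divide_strict_left_mono mult_strict_right_mono mult_pos_pos
      simp: power2_eq_square)

theorem lemma5p3:
  fixes a :: real
  assumes "0 < a" and "a < 1"
  shows "(1 - a) * (1 / a + pi ^ 2 / 6 - 1) < Digamma 1 - Digamma a
       \<and> Digamma 1 - Digamma a < (1 - a) * (1 / a + 1)"
proof -
  have "a \<notin> \<int>\<^sub>\<le>\<^sub>0"
    using assms(1) by auto
  from Digamma_1_minus_Digamma_sums[OF this]
  have tail: "(\<lambda>k. (1 - a) / ((a + real (Suc k)) * (real (Suc k) + 1)))
      sums (Digamma 1 - Digamma a - (1 - a) / a)"
    by (subst sums_Suc_iff) simp
  have "(1 - a) * (pi\<^sup>2 / 6 - 1) < Digamma 1 - Digamma a - (1 - a) / a"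
  proof (rule sums_less[OF _ sums_mult[OF inverse_squares_from_2_sums] tail])
    show "(1 - a) * (1 / (real (Suc k) + 1)\<^sup>2)
        < (1 - a) / ((a + real (Suc k)) * (real (Suc k) + 1))" for k
      using Digamma_series_term_bounds(1)[OF assms, of "real (Suc k)"] by simp
  qed
  moreover have "Digamma 1 - Digamma a - (1 - a) / a < (1 - a) * 1"
  proof (rule sums_less[OF _ tail sums_mult[OF inverse_consecutive_products_sums]])
    show "(1 - a) / ((a + real (Suc k)) * (real (Suc k) + 1))
        < (1 - a) * (1 / (real (Suc k) * (real (Suc k) + 1)))" for k
      using Digamma_series_term_bounds(2)[OF assms, of "real (Suc k)"] by simp
  qed
  ultimately show ?thesis
    using assms(1) by (simp add: field_simps)
qed

end
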